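(* Assume (H1) and (H2), and fix $\alpha_0>0$. Then for all $f_1,f_1^*\in C[0,\alpha_0]$, $$\|U^{\alpha_0}(f_1)-U^{\alpha_0}(f_1^* )\|\le \varphi(\alpha_0)\,\|f_1-f_1^*\|,\qquad \varphi(\alpha_0):=2D^*\bar F_1(\alpha_0).$$
   Context: Fix constants $a>0$, $Q_0>0$, $\lambda_0>0$, $\theta_m>0$ and put $D^*=\frac{Q_0}{4\pi\lambda_0\theta_m}$. For $\alpha_0>0$: $C[0,\alpha_0]$ is the Banach space of real continuous functions on $[0,\alpha_0]$ with norm $\|f\|=\max_{[0,\alpha_0]}|f|$. We are given maps $L^*,N^*$ assigning to each $f_1\in C[0,\alpha_0]$ positive continuous functions $L^*(f_1),N^*(f_1)$ on $(0,\alpha_0]$. Define, for $0\le\eta\le\alpha_0$: $E_1(0,\eta,f_1)=\exp\big(-\alpha_0 a\int_0^{\eta}\frac{N^*(f_1)(s)}{L^*(f_1)(s)}ds\big)$, $F_1(0,\eta,f_1)=\int_0^{\eta}\frac{E_1(0,s,f_1)}{s\,L^*(f_1)(s)}ds$, and the operator $U^{\alpha_0}(f_1)(\eta)=D^*\big[F_1(0,\alpha_0,f_1)-F_1(0,\eta,f_1)\big]$, $0\le\eta\le\alpha_0$. Hypothesis (H1) (the part used here): there are positive constants $\mu,\nu,L_{1m},L_{1M},N_{1m},N_{1M}$ with $\mu>\max(1,\nu)$ such that for all $\alpha_0>0$, all $f_1\in C[0,\alpha_0]$ and all $0<\eta\le\alpha_0$: $L_{1m}\eta^{-\mu}\le L^*(f_1)(\eta)\le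 L_{1M}\eta^{-\mu}$ and $N_{1m}\eta^{-\nu}\le N^*(f_1)(\eta)\le N_{1M}\eta^{-\nu}$. Hypothesis (H2) (the part used here): there are constants $\bar L_1,\bar N_1\ge0$ such that for all $\alpha_0>0$ and all $f_1,f_1^*\in C[0,\alpha_0]$: $\sup_{0<s\le\alpha_0}|L^*(f_1)(s)-L^*(f_1^* )(s)|\le\bar L_1\|f_1-f_1^*\|$ and $\sup_{0<s\le\alpha_0}|N^*(f_1)(s)-N^*(f_1^* )(s)|\le\bar N_1\|f_1-f_1^*\|$. For $z>0$, $\bar F_1(z)=\frac{za}{L_{1m}^2}\Big(\frac{\bar N_1 z^{2\mu+1}}{(\mu+1)(2\mu+1)}+\frac{\bar L_1N_{1M}}{L_{1m}}\frac{z^{3\mu-\nu+1}}{(2\mu-\nu+1)(3\mu-\nu+1)}\Big)+\frac{\bar L_1}{L_{1m}^2}\frac{z^{2\mu}}{2\mu}$. *)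

theory Defs
  imports "HOL-Analysis.Analysis"
begin

definition supnorm :: "real \<Rightarrow> (real \<Rightarrow> real) \<Rightarrow> real" where
  "supnorm \<alpha>0 f = (SUP x\<in>{0..\<alpha>0}. \<bar>f x\<bar>)"

definition Dstar :: "real \<Rightarrow> real \<Rightarrow> real \<Rightarrow> real" where
  "Dstar Q0 lam0 \<theta>m = Q0 / (4 * pi * lam0 * \<theta>m)"

text \<open>L and N are the maps L^*, N^* for the fixed alpha0, applied to f1.\<close>
definition E1 :: "real \<Rightarrow> real \<Rightarrow> ((real \<Rightarrow> real) \<Rightarrow> real \<Rightarrow> real)
    \<Rightarrow> ((real \<Rightarrow> real) \<Rightarrow> real \<Rightarrow> real) \<Rightarrow> (real \<Rightarrow> real) \<Rightarrow> real \<Rightarrow> real" where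
  "E1 a \<alpha>0 L N f \<eta> = exp (- (\<alpha>0 * a * integral {0..\<eta>} (\<lambda>s. N f s / L f s)))"

definition F1 :: "real \<Rightarrow> real \<Rightarrow> ((real \<Rightarrow> real) \<Rightarrow> real \<Rightarrow> real)
    \<Rightarrow> ((real \<Rightarrow> real) \<Rightarrow> real \<Rightarrow> real) \<Rightarrow> (real \<Rightarrow> real) \<Rightarrow> real \<Rightarrow> real" where
  "F1 a \<alpha>0 L N f \<eta> = integral {0..\<eta>} (\<lambda>s. E1 a \<alpha>0 L N f s / (s * L f s))"

definition Uop :: "real \<Rightarrow> real \<Rightarrow> real \<Rightarrow> real \<Rightarrow> real \<Rightarrow> ((real \<Rightarrow> real) \<Rightarrow> real \<Rightarrow> real)
    \<Rightarrow> ((real \<Rightarrow> real) \<Rightarrow> real \<Rightarrow> real) \<Rightarrow> (real \<Rightarrow> real) \<Rightarrow> real \<Rightarrow> real" where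
  "Uop a Q0 lam0 \<theta>m \<alpha>0 L N f \<eta> =
     Dstar Q0 lam0 \<theta>m * (F1 a \<alpha>0 L N f \<alpha>0 - F1 a \<alpha>0 L N f \<eta>)"

definition Fbar1 :: "real \<Rightarrow> real \<Rightarrow> real \<Rightarrow> real \<Rightarrow> real \<Rightarrow> real \<Rightarrow> real \<Rightarrow> real \<Rightarrow> real" where
  "Fbar1 a \<mu> \<nu> L1m N1M Lbar Nbar z =
     z * a / L1m^2 * (Nbar * z powr (2*\<mu>+1) / ((\<mu>+1) * (2*\<mu>+1))
        + Lbar * N1M / L1m * z powr (3*\<mu>-\<nu>+1) / ((2*\<mu>-\<nu>+1) * (3*\<mu>-\<nu>+1)))
     + Lbar / L1m^2 * z powr (2*\<mu>) / (2*\<mu>)"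

end

theory Submission
  imports Defs
begin

text \<open>Since \<open>U(f) - U(g)\<close> is \<open>D\<^sup>*\<close> times a difference of values of \<open>F\<^sub>1(f) - F\<^sub>1(g)\<close>, it
  suffices to bound \<open>|F\<^sub>1(f)(x) - F\<^sub>1(g)(x)|\<close> by \<open>F\<^sub>1bar(\<alpha>) \<delta>\<close>, where \<open>\<delta> = \<parallel>f - g\<parallel>\<close>.
  By (H1), \<open>1/L \<le> s\<^sup>\<mu>/L\<^sub>1\<^sub>m\<close>, so (H2) makes \<open>|N(f)/L(f) - N(g)/L(g)|\<close> at most \<open>\<delta>\<close> times
  a combination of \<open>s\<^sup>\<mu>\<close> and \<open>s\<^sup>2\<^sup>\<mu>\<^sup>-\<^sup>\<nu>\<close>. Integrating, and using that \<open>exp(-x)\<close> is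
  1-Lipschitz on \<open>[0,\<infinity>)\<close>, bounds the difference of the exponential factors \<open>E\<^sub>1\<close>; the same
  quotient estimate applied to \<open>E\<^sub>1/(s L)\<close> bounds the integrands of \<open>F\<^sub>1\<close> by \<open>\<delta>\<close> times a sum
  of powers of \<open>s\<close> whose integral over \<open>[0,\<alpha>]\<close> is exactly \<open>F\<^sub>1bar(\<alpha>) \<delta>\<close>.\<close>

lemma integrable_on_Icc_iff_Ioc:
  fixes f :: "real \<Rightarrow> 'a::banach"
  shows "f integrable_on {a..b} \<longleftrightarrow> f integrable_on {a<..b}"
  by (rule integrable_spike_set_eq) (rule negligible_subset[of "{a}"], auto)

lemma integral_Icc_eq_Ioc:
  fixes f :: "real \<Rightarrow> 'a::banach"
  shows "integral {a..b} f = integral {a<..b} f"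
  by (rule integral_spike_set) (auto intro: negligible_subset[of "{a}"])

lemma bounded_continuous_on_Ioc_integrable:
  fixes f :: "real \<Rightarrow> real"
  assumes f: "continuous_on {a<..b} f" and bound: "\<And>t. t \<in> {a<..b} \<Longrightarrow> \<bar>f t\<bar> \<le> B"
  shows "f integrable_on {a..b}"
proof -
  have "f \<in> borel_measurable (lebesgue_on {a<..b})"
    by (rule continuous_imp_measurable_on_sets_lebesgue[OF f]) simp
  moreover have "(\<lambda>t. B) integrable_on {a<..b}"
    using integrable_on_Icc_iff_Ioc[THEN iffD1, OF integrable_const_ivl[of B a b]] .
  ultimately have "f integrable_on {a<..b}"
    by (rule measurable_bounded_by_integrable_imp_integrable) (simp_all add: bound)
  then show ?thesis
    by (simp add: integrable_on_Icc_iff_Ioc)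
qed

lemma abs_integral_le_Ioc:
  fixes f g :: "real \<Rightarrow> real"
  assumes "f integrable_on {a..b}" "g integrable_on {a..b}" "\<And>t. t \<in> {a<..b} \<Longrightarrow> \<bar>f t\<bar> \<le> g t"
  shows "\<bar>integral {a..b} f\<bar> \<le> integral {a..b} g"
  using integral_norm_bound_integral[of f "{a<..b}" g] assms
  by (simp add: integral_Icc_eq_Ioc integrable_on_Icc_iff_Ioc)

lemma integral_le_Ioc:
  fixes f g :: "real \<Rightarrow> real"
  assumes "f integrable_on {a..b}" "g integrable_on {a..b}" "\<And>t. t \<in> {a<..b} \<Longrightarrow> f t \<le> g t"
  shows "integral {a..b} f \<le> integral {a..b} g"
  using integral_le[of f "{a<..b}" g] assms
  by (simp add: integral_Icc_eq_Ioc integrable_on_Icc_iff_Ioc)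

lemma abs_exp_minus_diff_le:
  fixes x y :: real
  assumes "0 \<le> x" "0 \<le> y"
  shows "\<bar>exp (-x) - exp (-y)\<bar> \<le> \<bar>x - y\<bar>"
proof -
  have le: "exp (-u) - exp (-v) \<le> v - u" if "0 \<le> u" "u \<le> v" for u v :: real
  proof -
    have "exp (-u) - exp (-v) = exp (-u) * (1 - exp (u - v))"
      by (simp add: algebra_simps flip: exp_add)
    also have "\<dots> \<le> 1 * (v - u)"
      using exp_ge_add_one_self[of "u - v"] that by (intro mult_mono) (auto simp: algebra_simps)
    finally show ?thesis by simp
  qed
  show ?thesis
    using le[of x y] le[of y x] assms by (cases "x \<le> y") auto
qed

lemma abs_divide_diff_le:
  fixes N N' L L' A C P Q :: real
  assumes "0 < L" "0 < L'" "1 / L \<le> P" "1 / L' \<le> P" "0 \<le> N'" "N' \<le> Q"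
    and "\<bar>N - N'\<bar> \<le> A" "\<bar>L - L'\<bar> \<le> C"
  shows "\<bar>N / L - N' / L'\<bar> \<le> A * P + Q * C * P\<^sup>2"
proof -
  have P: "0 \<le> P"
    using assms(1,3) zero_less_divide_1_iff[of L] by linarith
  have "N / L - N' / L' = (N - N') * (1 / L) + N' * (L' - L) * (1 / L * (1 / L'))"
    using assms(1,2) by (simp add: field_simps)
  also have "\<bar>\<dots>\<bar> \<le> \<bar>N - N'\<bar> * (1 / L) + N' * \<bar>L - L'\<bar> * (1 / L * (1 / L'))"
    using assms(1,2,5) by (auto simp: abs_mult abs_minus_commute intro: abs_triangle_ineq[THEN order_trans])
  also have "\<dots> \<le> A * P + Q * C * (P * P)"
    using assms P by (intro add_mono mult_mono) auto
  finally show ?thesis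
    by (simp add: power2_eq_square)
qed

text \<open>Of hypothesis (H1) only the lower bound on \<open>L\<^sup>*\<close> and the upper bound on \<open>N\<^sup>*\<close> enter
  the estimate.\<close>

definition power_bounded_pair ::
    "real \<Rightarrow> real \<Rightarrow> real \<Rightarrow> real \<Rightarrow> real \<Rightarrow> (real \<Rightarrow> real) \<Rightarrow> (real \<Rightarrow> real) \<Rightarrow> bool" where
  "power_bounded_pair \<alpha> \<mu> \<nu> L1m N1M L N \<longleftrightarrow>
     continuous_on {0<..\<alpha>} L \<and> continuous_on {0<..\<alpha>} N \<and>
     (\<forall>s\<in>{0<..\<alpha>}. 0 < L s \<and> 0 < N s \<and> L1m * s powr (-\<mu>) \<le> L s \<and> N s \<le> N1M * s powr (-\<nu>))"

locale power_bounds =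
  fixes a \<alpha> \<mu> \<nu> L1m N1M :: real
  assumes a_pos: "0 < a" and \<alpha>_pos: "0 < \<alpha>" and \<mu>_gt: "max 1 \<nu> < \<mu>" and \<nu>_pos: "0 < \<nu>"
    and L1m_pos: "0 < L1m" and N1M_pos: "0 < N1M"
begin

lemma inverse_le_powr:
  assumes "power_bounded_pair \<alpha> \<mu> \<nu> L1m N1M L N" and s: "s \<in> {0<..\<alpha>}"
  shows "1 / L s \<le> s powr \<mu> / L1m"
proof -
  have "L1m / s powr \<mu> \<le> L s" "0 < L s"
    using assms by (auto simp: power_bounded_pair_def powr_minus divide_inverse)
  then have "1 / L s \<le> 1 / (L1m / s powr \<mu>)"
    using s L1m_pos by (intro divide_left_mono) auto
  then show ?thesis by simp
qed

lemma ratio_integrable: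
  assumes pair: "power_bounded_pair \<alpha> \<mu> \<nu> L1m N1M L N"
  shows "(\<lambda>s. N s / L s) integrable_on {0..\<alpha>}"
proof (rule bounded_continuous_on_Ioc_integrable)
  show "continuous_on {0<..\<alpha>} (\<lambda>s. N s / L s)"
    using pair by (intro continuous_on_divide) (auto simp: power_bounded_pair_def)
  fix s assume s: "s \<in> {0<..\<alpha>}"
  have N: "0 < N s" "N s \<le> N1M * s powr (-\<nu>)" and L: "0 < L s"
    using pair s by (auto simp: power_bounded_pair_def)
  have "\<bar>N s / L s\<bar> = N s * (1 / L s)"
    using N L by simp
  also have "\<dots> \<le> N1M * s powr (-\<nu>) * (s powr \<mu> / L1m)"
    using N L inverse_le_powr[OF pair s] by (intro mult_mono) auto
  also have "\<dots> = N1M * s powr (\<mu> - \<nu>) / L1m"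
    using s by (simp add: powr_diff powr_minus divide_inverse)
  also have "\<dots> \<le> N1M * \<alpha> powr (\<mu> - \<nu>) / L1m"
    using s \<mu>_gt L1m_pos N1M_pos by (intro divide_right_mono mult_left_mono powr_mono2) auto
  finally show "\<bar>N s / L s\<bar> \<le> N1M * \<alpha> powr (\<mu> - \<nu>) / L1m" .
qed

lemma ratio_integral_nonneg:
  assumes pair: "power_bounded_pair \<alpha> \<mu> \<nu> L1m N1M L N" and x: "x \<in> {0..\<alpha>}"
  shows "0 \<le> integral {0..x} (\<lambda>s. N s / L s)"
proof -
  have "integral {0..x} (\<lambda>s. 0) \<le> integral {0..x} (\<lambda>s. N s / L s)"
    using pair x by (intro integral_le_Ioc integrable_on_subinterval[OF ratio_integrable[OF pair]])
      (auto simp: power_bounded_pair_def less_imp_le)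
  then show ?thesis by simp
qed

lemma E1_le_one:
  assumes "power_bounded_pair \<alpha> \<mu> \<nu> L1m N1M (L f) (N f)" and "x \<in> {0..\<alpha>}"
  shows "E1 a \<alpha> L N f x \<le> 1"
  using ratio_integral_nonneg[OF assms] a_pos \<alpha>_pos by (simp add: E1_def)

lemma F1_integrand_integrable:
  assumes pair: "power_bounded_pair \<alpha> \<mu> \<nu> L1m N1M (L f) (N f)"
  shows "(\<lambda>s. E1 a \<alpha> L N f s / (s * L f s)) integrable_on {0..\<alpha>}"
proof (rule bounded_continuous_on_Ioc_integrable)
  have "continuous_on {0..\<alpha>} (E1 a \<alpha> L N f)"
    unfolding E1_def
    by (intro continuous_intros indefinite_integral_continuous_1 ratio_integrable[OF pair])
  then have "continuous_on {0<..\<alpha>} (E1 a \<alpha> L N f)"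
    by (rule continuous_on_subset) auto
  then show "continuous_on {0<..\<alpha>} (\<lambda>s. E1 a \<alpha> L N f s / (s * L f s))"
    using pair by (intro continuous_on_divide continuous_on_mult continuous_on_id)
      (auto simp: power_bounded_pair_def)
  fix s assume s: "s \<in> {0<..\<alpha>}"
  have L: "0 < L f s"
    using pair s by (auto simp: power_bounded_pair_def)
  then have "\<bar>E1 a \<alpha> L N f s / (s * L f s)\<bar> = E1 a \<alpha> L N f s * (1 / s * (1 / L f s))"
    using s by (simp add: E1_def)
  also have "\<dots> \<le> 1 * (1 / s * (s powr \<mu> / L1m))"
    using E1_le_one[of L f N s, OF pair] inverse_le_powr[OF pair s] s L by (intro mult_mono) (auto simp: E1_def)
  also have "\<dots> = s powr (\<mu> - 1) / L1m"
    using s by (simp add: powr_diff)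
  also have "\<dots> \<le> \<alpha> powr (\<mu> - 1) / L1m"
    using s \<mu>_gt L1m_pos by (auto intro!: divide_right_mono powr_mono2)
  finally show "\<bar>E1 a \<alpha> L N f s / (s * L f s)\<bar> \<le> \<alpha> powr (\<mu> - 1) / L1m" .
qed

end

locale two_power_bounded_pairs = power_bounds +
  fixes L N :: "(real \<Rightarrow> real) \<Rightarrow> real \<Rightarrow> real" and f g :: "real \<Rightarrow> real" and Lbar Nbar \<delta> :: real
  assumes pair_f: "power_bounded_pair \<alpha> \<mu> \<nu> L1m N1M (L f) (N f)"
    and pair_g: "power_bounded_pair \<alpha> \<mu> \<nu> L1m N1M (L g) (N g)"
    and L_diff: "\<And>s. s \<in> {0<..\<alpha>} \<Longrightarrow> \<bar>L f s - L g s\<bar> \<le> Lbar * \<delta>"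
    and N_diff: "\<And>s. s \<in> {0<..\<alpha>} \<Longrightarrow> \<bar>N f s - N g s\<bar> \<le> Nbar * \<delta>"
begin

lemma diff_bounds_nonneg: "0 \<le> Lbar * \<delta>" "0 \<le> Nbar * \<delta>"
  using L_diff[of \<alpha>] N_diff[of \<alpha>] \<alpha>_pos by auto

definition ratio_integral_bound :: "real \<Rightarrow> real" where
  "ratio_integral_bound x = \<delta> * (Nbar / L1m * (x powr (\<mu> + 1) / (\<mu> + 1))
     + N1M * Lbar / L1m\<^sup>2 * (x powr (2*\<mu> - \<nu> + 1) / (2*\<mu> - \<nu> + 1)))"

definition integrand_bound :: "real \<Rightarrow> real" where
  "integrand_bound s = \<delta> * (\<alpha> * a * Nbar / ((\<mu> + 1) * L1m\<^sup>2) * s powr (2*\<mu>)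
     + \<alpha> * a * N1M * Lbar / ((2*\<mu> - \<nu> + 1) * L1m ^ 3) * s powr (3*\<mu> - \<nu>)
     + Lbar / L1m\<^sup>2 * s powr (2*\<mu> - 1))"

lemma abs_ratio_diff_le:
  assumes t: "t \<in> {0<..\<alpha>}"
  shows "\<bar>N f t / L f t - N g t / L g t\<bar>
    \<le> \<delta> * (Nbar / L1m * t powr \<mu> + N1M * Lbar / L1m\<^sup>2 * t powr (2*\<mu> - \<nu>))"
proof -
  have "0 < L f t" "0 < L g t" "0 < N g t" "N g t \<le> N1M * t powr (-\<nu>)"
    using pair_f pair_g t by (auto simp: power_bounded_pair_def)
  then have "\<bar>N f t / L f t - N g t / L g t\<bar>
      \<le> Nbar * \<delta> * (t powr \<mu> / L1m) + N1M * t powr (-\<nu>) * (Lbar * \<delta>) * (t powr \<mu> / L1m)\<^sup>2"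
    using L_diff[OF t] N_diff[OF t] inverse_le_powr[OF pair_f t] inverse_le_powr[OF pair_g t]
    by (intro abs_divide_diff_le) auto
  also have "\<dots> = \<delta> * (Nbar / L1m * t powr \<mu> + N1M * Lbar / L1m\<^sup>2 * t powr (2*\<mu> - \<nu>))"
    using t by (simp add: powr_add[symmetric] field_simps power2_eq_square)
  finally show ?thesis .
qed

lemma abs_ratio_integral_diff_le:
  assumes x: "x \<in> {0..\<alpha>}"
  shows "\<bar>integral {0..x} (\<lambda>s. N f s / L f s) - integral {0..x} (\<lambda>s. N g s / L g s)\<bar>
    \<le> ratio_integral_bound x"
proof -
  let ?b = "\<lambda>t. \<delta> * (Nbar / L1m * t powr \<mu> + N1M * Lbar / L1m\<^sup>2 * t powr (2*\<mu> - \<nu>))"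
  have b: "(?b has_integral ratio_integral_bound x) {0..x}"
    unfolding ratio_integral_bound_def using x \<mu>_gt \<nu>_pos
    by (intro has_integral_mult_right has_integral_add has_integral_powr_from_0) auto
  have int_f: "(\<lambda>s. N f s / L f s) integrable_on {0..x}"
    and int_g: "(\<lambda>s. N g s / L g s) integrable_on {0..x}"
    using x by (auto intro: integrable_on_subinterval[OF ratio_integrable[OF pair_f]]
        integrable_on_subinterval[OF ratio_integrable[OF pair_g]])
  have "\<bar>integral {0..x} (\<lambda>s. N f s / L f s - N g s / L g s)\<bar> \<le> integral {0..x} ?b"
    using x b int_f int_g abs_ratio_diff_le by (intro abs_integral_le_Ioc integrable_diff) auto
  then show ?thesis
    by (simp only: integral_diff[OF int_f int_g] integral_unique[OF b])
qed

lemma abs_E1_diff_le: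
  assumes x: "x \<in> {0..\<alpha>}"
  shows "\<bar>E1 a \<alpha> L N f x - E1 a \<alpha> L N g x\<bar> \<le> \<alpha> * a * ratio_integral_bound x"
proof -
  let ?I = "\<lambda>h. integral {0..x} (\<lambda>s. N h s / L h s)"
  have "\<bar>E1 a \<alpha> L N f x - E1 a \<alpha> L N g x\<bar> \<le> \<bar>\<alpha> * a * ?I f - \<alpha> * a * ?I g\<bar>"
    unfolding E1_def using ratio_integral_nonneg[OF pair_f x] ratio_integral_nonneg[OF pair_g x]
      \<alpha>_pos a_pos by (intro abs_exp_minus_diff_le) auto
  also have "\<dots> = \<alpha> * a * \<bar>?I f - ?I g\<bar>"
    using \<alpha>_pos a_pos by (simp add: abs_mult flip: right_diff_distrib)
  also have "\<dots> \<le> \<alpha> * a * ratio_integral_bound x"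
    using abs_ratio_integral_diff_le[OF x] \<alpha>_pos a_pos by (intro mult_left_mono) auto
  finally show ?thesis .
qed

lemma integrand_bound_eq:
  assumes s: "0 < s"
  shows "\<alpha> * a * ratio_integral_bound s * (s powr (\<mu> - 1) / L1m) + s * (Lbar * \<delta>) * (s powr (\<mu> - 1) / L1m)\<^sup>2
    = integrand_bound s"
proof -
  have powers: "s powr (\<mu> + 1) * s powr (\<mu> - 1) = s powr (2*\<mu>)"
      "s powr (2*\<mu> - \<nu> + 1) * s powr (\<mu> - 1) = s powr (3*\<mu> - \<nu>)"
      "s * (s powr (\<mu> - 1))\<^sup>2 = s powr (2*\<mu> - 1)"
    using s by (simp_all add: powr_add[symmetric] power2_eq_square powr_mult_base algebra_simps)
  have "\<alpha> * a * ratio_integral_bound s * (s powr (\<mu> - 1) / L1m) + s * (Lbar * \<delta>) * (s powr (\<mu> - 1) / L1m)\<^sup>2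
    = \<delta> * (\<alpha> * a * Nbar / ((\<mu> + 1) * L1m\<^sup>2) * (s powr (\<mu> + 1) * s powr (\<mu> - 1))
     + \<alpha> * a * N1M * Lbar / ((2*\<mu> - \<nu> + 1) * L1m ^ 3) * (s powr (2*\<mu> - \<nu> + 1) * s powr (\<mu> - 1))
     + Lbar / L1m\<^sup>2 * (s * (s powr (\<mu> - 1))\<^sup>2))"
    unfolding ratio_integral_bound_def
    by (simp add: algebra_simps power2_eq_square power3_eq_cube power_divide)
  then show ?thesis
    unfolding powers integrand_bound_def .
qed

lemma abs_F1_integrand_diff_le:
  assumes s: "s \<in> {0<..\<alpha>}"
  shows "\<bar>E1 a \<alpha> L N f s / (s * L f s) - E1 a \<alpha> L N g s / (s * L g s)\<bar> \<le> integrand_bound s"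
proof -
  have inverse_le: "1 / (s * L h s) \<le> s powr (\<mu> - 1) / L1m"
    if "power_bounded_pair \<alpha> \<mu> \<nu> L1m N1M (L h) (N h)" for h
  proof -
    have "1 / (s * L h s) = 1 / s * (1 / L h s)" by simp
    also have "\<dots> \<le> 1 / s * (s powr \<mu> / L1m)"
      using inverse_le_powr[OF that s] s by (intro mult_left_mono) auto
    finally show ?thesis
      using s by (simp add: powr_diff)
  qed
  have "\<bar>s * L f s - s * L g s\<bar> = s * \<bar>L f s - L g s\<bar>"
    using s by (simp add: abs_mult flip: right_diff_distrib)
  also have "\<dots> \<le> s * (Lbar * \<delta>)"
    using L_diff[OF s] s by (intro mult_left_mono) auto
  finally have sL_diff: "\<bar>s * L f s - s * L g s\<bar> \<le> s * (Lbar * \<delta>)" .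
  have "\<bar>E1 a \<alpha> L N f s / (s * L f s) - E1 a \<alpha> L N g s / (s * L g s)\<bar>
    \<le> \<alpha> * a * ratio_integral_bound s * (s powr (\<mu> - 1) / L1m) + 1 * (s * (Lbar * \<delta>)) * (s powr (\<mu> - 1) / L1m)\<^sup>2"
    using pair_f pair_g s inverse_le[OF pair_f] inverse_le[OF pair_g] sL_diff
      abs_E1_diff_le[of s] E1_le_one[of L g N s, OF pair_g]
    by (intro abs_divide_diff_le) (auto simp: power_bounded_pair_def E1_def)
  then show ?thesis
    using integrand_bound_eq s by simp
qed

lemma integrand_bound_has_integral:
  "(integrand_bound has_integral Fbar1 a \<mu> \<nu> L1m N1M Lbar Nbar \<alpha> * \<delta>) {0..\<alpha>}"
proof -
  have "(integrand_bound has_integral \<delta> * (\<alpha> * a * Nbar / ((\<mu> + 1) * L1m\<^sup>2) * (\<alpha> powr (2*\<mu> + 1) / (2*\<mu> + 1))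
     + \<alpha> * a * N1M * Lbar / ((2*\<mu> - \<nu> + 1) * L1m ^ 3) * (\<alpha> powr (3*\<mu> - \<nu> + 1) / (3*\<mu> - \<nu> + 1))
     + Lbar / L1m\<^sup>2 * (\<alpha> powr (2*\<mu> - 1 + 1) / (2*\<mu> - 1 + 1)))) {0..\<alpha>}"
    unfolding integrand_bound_def using \<alpha>_pos \<mu>_gt \<nu>_pos
    by (intro has_integral_mult_right has_integral_add has_integral_powr_from_0) auto
  then show ?thesis
    by (simp add: Fbar1_def algebra_simps power2_eq_square power3_eq_cube)
qed

lemma integrand_bound_nonneg:
  assumes "0 \<le> s"
  shows "0 \<le> integrand_bound s"
proof -
  have "integrand_bound s = \<alpha> * a * (Nbar * \<delta>) / ((\<mu> + 1) * L1m\<^sup>2) * s powr (2*\<mu>)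
     + \<alpha> * a * N1M * (Lbar * \<delta>) / ((2*\<mu> - \<nu> + 1) * L1m ^ 3) * s powr (3*\<mu> - \<nu>)
     + (Lbar * \<delta>) / L1m\<^sup>2 * s powr (2*\<mu> - 1)"
    by (simp add: integrand_bound_def algebra_simps)
  also have "0 \<le> \<dots>"
    using diff_bounds_nonneg \<alpha>_pos a_pos \<mu>_gt \<nu>_pos N1M_pos L1m_pos by simp
  finally show ?thesis .
qed

lemma abs_F1_diff_le:
  assumes x: "x \<in> {0..\<alpha>}"
  shows "\<bar>F1 a \<alpha> L N f x - F1 a \<alpha> L N g x\<bar> \<le> Fbar1 a \<mu> \<nu> L1m N1M Lbar Nbar \<alpha> * \<delta>"
proof -
  have int_f: "(\<lambda>s. E1 a \<alpha> L N f s / (s * L f s)) integrable_on {0..x}"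
    and int_g: "(\<lambda>s. E1 a \<alpha> L N g s / (s * L g s)) integrable_on {0..x}"
    using x by (auto intro: integrable_on_subinterval[OF F1_integrand_integrable[of L f N, OF pair_f]]
        integrable_on_subinterval[OF F1_integrand_integrable[of L g N, OF pair_g]])
  have int_bound: "integrand_bound integrable_on {0..\<alpha>}"
    using integrand_bound_has_integral by blast
  have "\<bar>F1 a \<alpha> L N f x - F1 a \<alpha> L N g x\<bar>
      = \<bar>integral {0..x} (\<lambda>s. E1 a \<alpha> L N f s / (s * L f s) - E1 a \<alpha> L N g s / (s * L g s))\<bar>"
    unfolding F1_def integral_diff[OF int_f int_g] ..
  also have "\<dots> \<le> integral {0..x} integrand_bound"
    using x abs_F1_integrand_diff_le
    by (intro abs_integral_le_Ioc integrable_diff int_f int_g integrable_on_subinterval[OF int_bound]) auto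
  also have "\<dots> \<le> integral {0..\<alpha>} integrand_bound"
    using x integrand_bound_nonneg
    by (intro integral_subset_le integrable_on_subinterval[OF int_bound] int_bound) auto
  also have "\<dots> = Fbar1 a \<mu> \<nu> L1m N1M Lbar Nbar \<alpha> * \<delta>"
    using integrand_bound_has_integral by (rule integral_unique)
  finally show ?thesis .
qed

lemma abs_Uop_diff_le:
  assumes D: "0 \<le> Dstar Q0 lam0 \<theta>m" and \<eta>: "\<eta> \<in> {0..\<alpha>}"
  shows "\<bar>Uop a Q0 lam0 \<theta>m \<alpha> L N f \<eta> - Uop a Q0 lam0 \<theta>m \<alpha> L N g \<eta>\<bar>
    \<le> 2 * Dstar Q0 lam0 \<theta>m * Fbar1 a \<mu> \<nu> L1m N1M Lbar Nbar \<alpha> * \<delta>"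
proof -
  let ?d = "\<lambda>x. F1 a \<alpha> L N f x - F1 a \<alpha> L N g x"
  have "Uop a Q0 lam0 \<theta>m \<alpha> L N f \<eta> - Uop a Q0 lam0 \<theta>m \<alpha> L N g \<eta>
      = Dstar Q0 lam0 \<theta>m * (?d \<alpha> - ?d \<eta>)"
    by (simp add: Uop_def algebra_simps)
  then have "\<bar>Uop a Q0 lam0 \<theta>m \<alpha> L N f \<eta> - Uop a Q0 lam0 \<theta>m \<alpha> L N g \<eta>\<bar>
      = Dstar Q0 lam0 \<theta>m * \<bar>?d \<alpha> - ?d \<eta>\<bar>"
    using D by (simp add: abs_mult)
  also have "\<dots> \<le> Dstar Q0 lam0 \<theta>m * (2 * (Fbar1 a \<mu> \<nu> L1m N1M Lbar Nbar \<alpha> * \<delta>))"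
    using abs_F1_diff_le[of \<alpha>] abs_F1_diff_le[OF \<eta>] \<alpha>_pos D
    by (intro mult_left_mono) auto
  finally show ?thesis
    by (simp add: mult_ac)
qed

end

lemma Dstar_pos: "0 < Q0 \<Longrightarrow> 0 < lam0 \<Longrightarrow> 0 < \<theta>m \<Longrightarrow> 0 < Dstar Q0 lam0 \<theta>m"
  by (simp add: Dstar_def)

lemma supnorm_le:
  assumes "0 \<le> \<alpha>" and "\<And>x. x \<in> {0..\<alpha>} \<Longrightarrow> \<bar>f x\<bar> \<le> c"
  shows "supnorm \<alpha> f \<le> c"
  unfolding supnorm_def using assms by (intro cSUP_least) auto

theorem lemma3:
  fixes a Q0 lam0 \<theta>m \<mu> \<nu> L1m L1M N1m N1M Lbar Nbar \<alpha>0 :: real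
    and Ls Ns :: "real \<Rightarrow> (real \<Rightarrow> real) \<Rightarrow> real \<Rightarrow> real"
    and f1 f1s :: "real \<Rightarrow> real"
  assumes pos: "a > 0" "Q0 > 0" "lam0 > 0" "\<theta>m > 0"
    and maps: "\<And>\<alpha> f. \<alpha> > 0 \<Longrightarrow> continuous_on {0..\<alpha>} f \<Longrightarrow>
        continuous_on {0<..\<alpha>} (Ls \<alpha> f) \<and> continuous_on {0<..\<alpha>} (Ns \<alpha> f) \<and>
        (\<forall>s\<in>{0<..\<alpha>}. Ls \<alpha> f s > 0 \<and> Ns \<alpha> f s > 0)"
    and H1_const: "\<mu> > 0" "\<nu> > 0" "L1m > 0" "L1M > 0" "N1m > 0" "N1M > 0" "\<mu> > max 1 \<nu>"
    and H1: "\<And>\<alpha> f \<eta>. \<alpha> > 0 \<Longrightarrow> continuous_on {0..\<alpha>} f \<Longrightarrow> 0 < \<eta> \<Longrightarrow> \<eta> \<le> \<alpha> \<Longrightarrow>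
        L1m * \<eta> powr (-\<mu>) \<le> Ls \<alpha> f \<eta> \<and> Ls \<alpha> f \<eta> \<le> L1M * \<eta> powr (-\<mu>) \<and>
        N1m * \<eta> powr (-\<nu>) \<le> Ns \<alpha> f \<eta> \<and> Ns \<alpha> f \<eta> \<le> N1M * \<eta> powr (-\<nu>)"
    and H2_const: "Lbar \<ge> 0" "Nbar \<ge> 0"
    and H2: "\<And>\<alpha> f g. \<alpha> > 0 \<Longrightarrow> continuous_on {0..\<alpha>} f \<Longrightarrow> continuous_on {0..\<alpha>} g \<Longrightarrow>
        (\<forall>s\<in>{0<..\<alpha>}. \<bar>Ls \<alpha> f s - Ls \<alpha> g s\<bar> \<le> Lbar * supnorm \<alpha> (\<lambda>x. f x - g x)) \<and>
        (\<forall>s\<in>{0<..\<alpha>}. \<bar>Ns \<alpha> f s - Ns \<alpha> g s\<bar> \<le> Nbar * supnorm \<alpha> (\<lambda>x. f x - g x))"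
    and alpha0: "\<alpha>0 > 0"
    and f1: "continuous_on {0..\<alpha>0} f1" and f1s: "continuous_on {0..\<alpha>0} f1s"
  shows "supnorm \<alpha>0 (\<lambda>\<eta>. Uop a Q0 lam0 \<theta>m \<alpha>0 (Ls \<alpha>0) (Ns \<alpha>0) f1 \<eta>
                          - Uop a Q0 lam0 \<theta>m \<alpha>0 (Ls \<alpha>0) (Ns \<alpha>0) f1s \<eta>)
         \<le> 2 * Dstar Q0 lam0 \<theta>m * Fbar1 a \<mu> \<nu> L1m N1M Lbar Nbar \<alpha>0
             * supnorm \<alpha>0 (\<lambda>x. f1 x - f1s x)"
proof -
  have pair: "power_bounded_pair \<alpha>0 \<mu> \<nu> L1m N1M (Ls \<alpha>0 h) (Ns \<alpha>0 h)"
    if "continuous_on {0..\<alpha>0} h" for h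
    using maps[OF alpha0 that] H1[OF alpha0 that] by (auto simp: power_bounded_pair_def)
  interpret two_power_bounded_pairs a \<alpha>0 \<mu> \<nu> L1m N1M "Ls \<alpha>0" "Ns \<alpha>0" f1 f1s Lbar Nbar
      "supnorm \<alpha>0 (\<lambda>x. f1 x - f1s x)"
    using pos(1) alpha0 H1_const pair[OF f1] pair[OF f1s] H2[OF alpha0 f1 f1s]
    by unfold_locales auto
  show ?thesis
    using alpha0 abs_Uop_diff_le Dstar_pos[OF pos(2-4)] by (intro supnorm_le) auto
qed

end
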